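(* Assume $\theta_i<1$ for all $i$ and $\theta_j>0$ for some $j$. Suppose $\mathcal G(C)$ is a star topology with center node $l$ and $\theta_l=0$. Then for every $x(0)\in\Delta_n$ the trajectory of system (A) converges exponentially to the unique equilibrium $x^*$, given by $x^*_i=1/n$ for $i\in\mathcal V_f\setminus\{l\}$, $x^*_i=\dfrac{n-\sqrt{n^2-4n\theta_i(1-\theta_i)}}{2n\theta_i}$ for $i\in\mathcal V_p$, and $x^*_l=\dfrac1n+\dfrac1n\sum_{j\in\mathcal V_p}\dfrac{\theta_j(1-x^*_j)}{1-\theta_jx^*_j}$.
   Context: Let $n\ge 2$, $\mathbf 1_n$ the all-ones vector, $I_n$ the identity matrix, $\Delta_n=\{x\in\mathbb R^n: x\ge 0,\ \mathbf 1_n^Tx=1\}$. Let $C\in\mathbb R^{n\times n}$ be a nonnegative row-stochastic matrix with zero diagonal, and $\mathcal G(C)$ the digraph on $\{1,\dots,n\}$ with an edge $(i,j)$ iff $C_{ij}>0$. $\mathcal G(C)$ is a star topology with center node $l$ if every edge of $\mathcal G(C)$ is either from $l$ or to $l$ (i.e. $C_{ij}>0$ implies $i=l$ or $j=l$). Let $\theta=(\theta_1,\dots,\theta_n)\in[0,1]^n$, $\Theta=\mathrm{diag}(\theta)$, $W(x)=\mathrm{diag}(x)+(I_n-\mathrm{diag}(x))C$. Let $\mathcal V_f=\{i:\theta_i=0\}$ and $\mathcal V_p=\{i:\theta_i>0\}$. System (A): $x(s+1)=F(x(s))$, $s=0,1,2,\dots$, $x(0)\in\Delta_n$, where $F(x)=(I_n-\Theta)(I_n-W(x)^T\Theta)^{-1}\mathbf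 1_n/n$. *)

theory Defs
  imports "HOL-Analysis.Analysis"
begin

definition prob_simplex :: "(real^'n) set" where
  "prob_simplex = {x. (\<forall>i. 0 \<le> x $ i) \<and> (\<Sum>i\<in>UNIV. x $ i) = 1}"

definition diag_mat :: "real^'n \<Rightarrow> real^'n^'n" where
  "diag_mat x = (\<chi> i j. if i = j then x $ i else 0)"

definition row_stochastic_zero_diag :: "real^'n^'n \<Rightarrow> bool" where
  "row_stochastic_zero_diag C \<longleftrightarrow>
     (\<forall>i j. 0 \<le> C $ i $ j) \<and> (\<forall>i. (\<Sum>j\<in>UNIV. C $ i $ j) = 1) \<and> (\<forall>i. C $ i $ i = 0)"

definition star_topology :: "real^'n^'n \<Rightarrow> 'n \<Rightarrow> bool" where
  "star_topology C l \<longleftrightarrow> (\<forall>i j. C $ i $ j > 0 \<longrightarrow> i = l \<or> j = l)"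

definition Wmat :: "real^'n^'n \<Rightarrow> real^'n \<Rightarrow> real^'n^'n" where
  "Wmat C x = diag_mat x + (mat 1 - diag_mat x) ** C"

definition Fmap :: "real^'n^'n \<Rightarrow> real^'n \<Rightarrow> real^'n \<Rightarrow> real^'n" where
  "Fmap C \<theta> x = (mat 1 - diag_mat \<theta>) *v
      (matrix_inv (mat 1 - transpose (Wmat C x) ** diag_mat \<theta>) *v
        (\<chi> i. 1 / real CARD('n)))"

definition trajectory :: "real^'n^'n \<Rightarrow> real^'n \<Rightarrow> real^'n \<Rightarrow> nat \<Rightarrow> real^'n" where
  "trajectory C \<theta> x0 s = (Fmap C \<theta> ^^ s) x0"

text \<open>The claimed equilibrium x* (V_f = {i. theta_i = 0}, V_p = {i. theta_i > 0}).\<close>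
definition xstar_p :: "real^'n \<Rightarrow> 'n \<Rightarrow> real" where
  "xstar_p \<theta> i = (let n = real CARD('n) in
      (n - sqrt (n^2 - 4 * n * \<theta> $ i * (1 - \<theta> $ i))) / (2 * n * \<theta> $ i))"

definition xstar :: "real^'n \<Rightarrow> 'n \<Rightarrow> real^'n" where
  "xstar \<theta> l = (\<chi> i. let n = real CARD('n) in
      if 0 < \<theta> $ i then xstar_p \<theta> i
      else if i = l then 1/n + (1/n) * (\<Sum>j\<in>{j. 0 < \<theta> $ j}.
              \<theta> $ j * (1 - xstar_p \<theta> j) / (1 - \<theta> $ j * xstar_p \<theta> j))
      else 1/n)"

end

theory Submission
  imports Defs
begin

text \<open>With a star topology and a center that is not stubborn (\<open>\<theta>\<^sub>l = 0\<close>), the linear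
  system defining \<open>F\<close> decouples: every leaf coordinate \<open>F(x)\<^sub>i = (1 - \<theta>\<^sub>i) / (n (1 - \<theta>\<^sub>i x\<^sub>i))\<close>
  depends on \<open>x\<^sub>i\<close> alone, and the center coordinate is then fixed because \<open>F\<close> preserves
  the simplex. Each scalar leaf map has the smaller root \<open>a\<close> of \<open>n \<theta> a\<^sup>2 - n a + 1 - \<theta> = 0\<close>
  as fixed point and contracts \<open>[0,1]\<close> towards it with rate \<open>\<theta> a / (1 - \<theta>) < 1\<close>; on the simplex
  the error of the center is bounded by the sum of the leaf errors. Uniqueness of the
  equilibrium follows from the exponential convergence.\<close>

definition leaf_map :: "real \<Rightarrow> real \<Rightarrow> real \<Rightarrow> real" where
  "leaf_map N t x = (1 - t) / (N * (1 - t * x))"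

lemma smaller_root_unit_interval:
  fixes N t a :: real
  assumes N: "2 \<le> N" and t: "0 < t" "t < 1"
    and a: "a = (N - sqrt (N\<^sup>2 - 4 * N * t * (1 - t))) / (2 * N * t)"
  shows "0 \<le> a" "a \<le> 1" "N * a * (1 - t * a) = 1 - t"
proof -
  define D where "D = N\<^sup>2 - 4 * N * t * (1 - t)"
  have "D - (N - 2 * N * t)\<^sup>2 = 4 * N * t * (1 - t) * (N - 1)"
    by (simp add: D_def power2_eq_square algebra_simps)
  also have "\<dots> \<ge> 0" using N t by simp
  finally have D_ge: "(N - 2 * N * t)\<^sup>2 \<le> D" by simp
  have "D \<le> N\<^sup>2" using N t by (simp add: D_def)
  hence sqrt_le: "sqrt D \<le> N"
    using N by (metis real_sqrt_le_mono real_sqrt_abs abs_of_nonneg order.trans zero_le_numeral)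
  have sqrt_ge: "N - 2 * N * t \<le> sqrt D"
    using real_sqrt_le_mono[OF D_ge] by (metis abs_ge_self order_trans real_sqrt_abs)
  have Nt: "0 < 2 * N * t" using N t by simp
  have a_eq: "2 * N * t * a = N - sqrt D" unfolding a D_def using Nt
    by (metis nonzero_mult_div_cancel_left order_less_irrefl times_divide_eq_right)
  show "0 \<le> a"
    using a_eq sqrt_le Nt by (metis diff_ge_0_iff_ge zero_le_mult_iff linorder_not_less)
  show "a \<le> 1"
    using a_eq sqrt_ge Nt by (metis mult.right_neutral mult_le_cancel_left_pos diff_le_eq add.commute)
  have "(N - 2 * N * t * a)\<^sup>2 = D" using a_eq D_ge by (simp add: order_trans[OF zero_le_power2])
  hence "4 * N * t * (N * a * (1 - t * a) - (1 - t)) = 0"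
    by (simp add: D_def power2_eq_square algebra_simps)
  thus "N * a * (1 - t * a) = 1 - t" using N t by simp
qed

lemma leaf_map_fixed_point:
  assumes "N * a * (1 - t * a) = 1 - t" and "t \<noteq> 1"
  shows "leaf_map N t a = a"
proof -
  have "N * (1 - t * a) \<noteq> 0" using assms by auto
  thus ?thesis using assms(1) by (simp add: leaf_map_def field_simps)
qed

lemma leaf_rate_less_one:
  fixes N t a :: real
  assumes N: "2 \<le> N" and t: "0 \<le> t" "t < 1"
    and a: "0 \<le> a" "a \<le> 1" "N * a * (1 - t * a) = 1 - t"
  shows "t * a < 1 - t"
proof -
  have "1 - t \<le> 1 - t * a" using t a(2) by (simp add: mult_left_le)
  hence "N * a * (1 - t * a) \<le> 1 * (1 - t * a)" using a(3) by simp
  moreover have "0 < 1 - t * a" using \<open>1 - t \<le> 1 - t * a\<close> t by linarith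
  ultimately have "N * a \<le> 1" by (simp add: mult_le_cancel_right_pos)
  hence "t + N * t * a < N" using N t by (smt (verit) mult.commute mult.left_commute mult_left_le)
  hence "t < N * (1 - t * a)" by (simp add: algebra_simps)
  moreover have "0 < a" using a(1,3) t by (cases "a = 0") auto
  ultimately have "t * a < N * a * (1 - t * a)" by (simp add: mult.commute mult.left_commute)
  thus ?thesis using a(3) by simp
qed

text \<open>At a fixed point \<open>a\<close>: \<open>leaf_map N t x - a = t a (x - a) / (1 - t x)\<close>.\<close>
lemma leaf_map_contraction:
  fixes N t a x :: real
  assumes t: "0 \<le> t" "t < 1" and a: "0 \<le> a" "N * a * (1 - t * a) = 1 - t" and x: "x \<le> 1"
  shows "\<bar>leaf_map N t x - a\<bar> \<le> t * a / (1 - t) * \<bar>x - a\<bar>"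
proof -
  have "1 - t \<le> 1 - t * x" using t x by (simp add: mult_left_le)
  hence x_pos: "0 < 1 - t * x" using t by linarith
  have "N \<noteq> 0" using a(2) t by auto
  hence "leaf_map N t x = a * (1 - t * a) / (1 - t * x)"
    by (simp add: leaf_map_def flip: a(2))
  also have "\<dots> = a + t * a * (x - a) / (1 - t * x)"
    using x_pos by (simp add: field_simps)
  finally have "\<bar>leaf_map N t x - a\<bar> = t * a * \<bar>x - a\<bar> / (1 - t * x)"
    using x_pos t a(1) by (simp add: abs_mult)
  also have "\<dots> \<le> t * a * \<bar>x - a\<bar> / (1 - t)"
    using t a(1) x_pos \<open>1 - t \<le> 1 - t * x\<close> by (intro divide_left_mono) auto
  finally show ?thesis by simp
qed

lemma matrix_inv_mult_vector_eq:
  fixes A :: "'a::field^'n^'n"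
  assumes "\<And>v. A *v v = 0 \<Longrightarrow> v = 0" and "A *v y = b"
  shows "matrix_inv A *v b = y"
proof -
  have "invertible A"
    using assms(1) matrix_left_invertible_ker invertible_left_inverse by blast
  hence "matrix_inv A ** A = mat 1"
    unfolding matrix_inv_def invertible_def by (rule someI_ex[THEN conjunct2])
  thus ?thesis
    using assms(2) by (metis matrix_vector_mul_assoc matrix_vector_mul_lid)
qed

lemma Wmat_nth: "Wmat C x $ j $ i = (if j = i then x $ j else 0) + (1 - x $ j) * C $ j $ i"
proof -
  have "((mat 1 - diag_mat x) ** C) $ j $ i = (1 - x $ j) * C $ j $ i"
    unfolding matrix_matrix_mult_def diag_mat_def mat_def
    by (simp add: left_diff_distrib sum_subtractf if_distrib if_distribR cong: if_cong)
  thus ?thesis by (simp add: Wmat_def diag_mat_def)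
qed

lemma diag_complement_mult_vector_nth:
  "((mat 1 - diag_mat \<theta>) *v y) $ i = (1 - \<theta> $ i) * (y :: real^'n) $ i"
  unfolding matrix_vector_mult_def diag_mat_def mat_def
  by (simp add: left_diff_distrib sum_subtractf if_distrib if_distribR cong: if_cong)

lemma Fmap_matrix_mult_vector_nth:
  "((mat 1 - transpose (Wmat C x) ** diag_mat \<theta>) *v v) $ i
     = v $ i - (\<Sum>j\<in>UNIV. Wmat C x $ j $ i * \<theta> $ j * v $ j)"
proof -
  have "(transpose (Wmat C x) ** diag_mat \<theta>) $ i $ j = Wmat C x $ j $ i * \<theta> $ j" for j
    by (simp add: matrix_matrix_mult_def diag_mat_def transpose_def if_distrib cong: if_cong)
  thus ?thesis
    by (simp add: matrix_vector_mult_diff_rdistrib) (simp add: matrix_vector_mult_def)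
qed

lemma prob_simplex_nth_bounds:
  assumes "x \<in> prob_simplex"
  shows "0 \<le> x $ i" "x $ i \<le> 1"
proof -
  have nonneg: "\<forall>j. 0 \<le> x $ j" and sum: "(\<Sum>j\<in>UNIV. x $ j) = 1"
    using assms by (auto simp: prob_simplex_def)
  show "0 \<le> x $ i" using nonneg by blast
  have "x $ i \<le> (\<Sum>j\<in>UNIV. x $ j)" using nonneg by (intro member_le_sum) auto
  thus "x $ i \<le> 1" using sum by simp
qed

lemma norm_diff_prob_simplex_le:
  assumes "x \<in> prob_simplex" "y \<in> prob_simplex"
  shows "norm (x - y) \<le> 2 * (\<Sum>i\<in>UNIV - {l}. \<bar>x $ i - y $ i\<bar>)"
proof -
  have split: "(\<Sum>i\<in>UNIV. v $ i) = v $ l + (\<Sum>i\<in>UNIV - {l}. v $ i)" for v :: "real^'a"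
    by (rule sum.remove) auto
  have "x $ l - y $ l = (\<Sum>i\<in>UNIV - {l}. y $ i - x $ i)"
    using assms split[of x] split[of y] by (simp add: prob_simplex_def sum_subtractf)
  also have "\<bar>\<dots>\<bar> \<le> (\<Sum>i\<in>UNIV - {l}. \<bar>x $ i - y $ i\<bar>)"
    by (subst abs_minus_commute) (rule sum_abs)
  finally have center: "\<bar>x $ l - y $ l\<bar> \<le> (\<Sum>i\<in>UNIV - {l}. \<bar>x $ i - y $ i\<bar>)" .
  have "norm (x - y) \<le> (\<Sum>i\<in>UNIV. \<bar>(x - y) $ i\<bar>)" by (rule norm_le_l1_cart)
  also have "\<dots> = \<bar>x $ l - y $ l\<bar> + (\<Sum>i\<in>UNIV - {l}. \<bar>x $ i - y $ i\<bar>)"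
    using split[of "\<chi> i. \<bar>(x - y) $ i\<bar>"] by simp
  finally show ?thesis using center by linarith
qed

locale star_network =
  fixes C :: "real^'n^'n" and \<theta> :: "real^'n" and l :: 'n
  assumes row_stochastic: "row_stochastic_zero_diag C"
    and star: "star_topology C l"
    and theta_nonneg: "0 \<le> \<theta> $ i"
    and theta_less_one: "\<theta> $ i < 1"
    and theta_center: "\<theta> $ l = 0"
begin

lemma C_leaf_leaf: "i \<noteq> l \<Longrightarrow> j \<noteq> l \<Longrightarrow> C $ i $ j = 0"
  using row_stochastic star unfolding row_stochastic_zero_diag_def star_topology_def
  by (metis order_le_less)

lemma C_leaf_center:
  assumes "i \<noteq> l"
  shows "C $ i $ l = 1"
proof -
  have "1 = (\<Sum>j\<in>UNIV. C $ i $ j)"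
    using row_stochastic by (simp add: row_stochastic_zero_diag_def)
  also have "\<dots> = C $ i $ l + (\<Sum>j\<in>UNIV - {l}. C $ i $ j)"
    by (rule sum.remove) auto
  also have "(\<Sum>j\<in>UNIV - {l}. C $ i $ j) = 0"
    using C_leaf_leaf[OF assms] by (intro sum.neutral) auto
  finally show ?thesis by simp
qed

lemma Fmap_matrix_mult_vector_star:
  "((mat 1 - transpose (Wmat C x) ** diag_mat \<theta>) *v v) $ i
     = (if i = l then v $ l - (\<Sum>j\<in>UNIV. \<theta> $ j * (1 - x $ j) * v $ j)
        else (1 - \<theta> $ i * x $ i) * v $ i)"
proof (cases "i = l")
  case True
  have column: "Wmat C x $ j $ l * \<theta> $ j * v $ j = \<theta> $ j * (1 - x $ j) * v $ j" for j
    by (cases "j = l") (simp_all add: Wmat_nth theta_center C_leaf_center)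
  show ?thesis using True by (simp add: Fmap_matrix_mult_vector_nth column)
next
  case False
  have column: "Wmat C x $ j $ i * \<theta> $ j * v $ j = (if j = i then \<theta> $ i * x $ i * v $ i else 0)"
    for j
    using False by (cases "j = l") (auto simp: Wmat_nth theta_center C_leaf_leaf)
  show ?thesis using False
    by (simp add: Fmap_matrix_mult_vector_nth column left_diff_distrib)
qed

lemma one_minus_theta_mult_pos:
  assumes "i \<noteq> l \<Longrightarrow> x $ i \<le> 1"
  shows "0 < 1 - \<theta> $ i * x $ i"
proof (cases "i = l")
  case False
  hence "\<theta> $ i * x $ i \<le> \<theta> $ i" using assms theta_nonneg by (simp add: mult_left_le)
  thus ?thesis using theta_less_one[of i] by linarith
qed (simp add: theta_center)

lemma Fmap_star:
  fixes x :: "real^'n"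
  defines "n \<equiv> real CARD('n)"
  assumes x: "\<And>i. i \<noteq> l \<Longrightarrow> x $ i \<le> 1"
  shows "Fmap C \<theta> x = (\<chi> i. if i = l
           then 1 / n + 1 / n * (\<Sum>j\<in>UNIV. \<theta> $ j * (1 - x $ j) / (1 - \<theta> $ j * x $ j))
           else leaf_map n (\<theta> $ i) (x $ i))"
proof -
  define M where "M = mat 1 - transpose (Wmat C x) ** diag_mat \<theta>"
  define y :: "real^'n" where "y = (\<chi> i. if i = l
           then 1 / n + 1 / n * (\<Sum>j\<in>UNIV. \<theta> $ j * (1 - x $ j) / (1 - \<theta> $ j * x $ j))
           else 1 / (n * (1 - \<theta> $ i * x $ i)))"
  have pos: "0 < 1 - \<theta> $ j * x $ j" for j by (rule one_minus_theta_mult_pos) (rule x)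
  have M_nth: "(M *v v) $ i = (if i = l then v $ l - (\<Sum>j\<in>UNIV. \<theta> $ j * (1 - x $ j) * v $ j)
        else (1 - \<theta> $ i * x $ i) * v $ i)" for v i
    unfolding M_def by (rule Fmap_matrix_mult_vector_star)
  have "v = 0" if "M *v v = 0" for v
  proof -
    have leaf: "v $ i = 0" if "i \<noteq> l" for i
      using M_nth[of v i] \<open>M *v v = 0\<close> that pos[of i] by simp
    have "(\<Sum>j\<in>UNIV. \<theta> $ j * (1 - x $ j) * v $ j) = 0"
      by (intro sum.neutral) (metis leaf theta_center mult_zero_left mult_zero_right)
    hence "v $ l = 0" using M_nth[of v l] \<open>M *v v = 0\<close> by simp
    with leaf show "v = 0" by (metis vec_eq_iff zero_index)
  qed
  moreover have "M *v y = (\<chi> i. 1 / n)"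
  proof -
    have "\<theta> $ j * (1 - x $ j) * y $ j = 1 / n * (\<theta> $ j * (1 - x $ j) / (1 - \<theta> $ j * x $ j))" for j
      by (cases "j = l") (simp_all add: y_def theta_center)
    hence "(M *v y) $ l = 1 / n" by (simp add: M_nth y_def sum_distrib_left)
    moreover have "(M *v y) $ i = 1 / n" if "i \<noteq> l" for i
      using that pos[of i] by (simp add: M_nth y_def)
    ultimately show ?thesis by (metis vec_eq_iff vec_lambda_beta)
  qed
  ultimately have "matrix_inv M *v (\<chi> i. 1 / n) = y" by (rule matrix_inv_mult_vector_eq)
  hence "Fmap C \<theta> x = (mat 1 - diag_mat \<theta>) *v y" by (simp add: Fmap_def M_def n_def)
  thus ?thesis
    by (simp add: vec_eq_iff diag_complement_mult_vector_nth y_def leaf_map_def theta_center)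
qed

lemma sum_Fmap:
  assumes x: "\<And>i. i \<noteq> l \<Longrightarrow> x $ i \<le> 1"
  shows "(\<Sum>i\<in>UNIV. Fmap C \<theta> x $ i) = 1"
proof -
  define n where "n = real CARD('n)"
  define inflow where "inflow j = 1 / n * (\<theta> $ j * (1 - x $ j) / (1 - \<theta> $ j * x $ j))" for j
  have F: "Fmap C \<theta> x $ i
      = (if i = l then 1 / n + sum inflow UNIV else leaf_map n (\<theta> $ i) (x $ i))" for i
    using Fmap_star[OF x] by (simp add: inflow_def n_def sum_distrib_left)
  have "0 < n" by (simp add: n_def)
  have "inflow j + leaf_map n (\<theta> $ j) (x $ j) = 1 / n" for j
    using one_minus_theta_mult_pos[OF x, of j] \<open>0 < n\<close>
    by (simp add: inflow_def leaf_map_def field_simps)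
  hence "sum inflow (UNIV - {l}) + (\<Sum>i\<in>UNIV - {l}. leaf_map n (\<theta> $ i) (x $ i)) = (n - 1) / n"
    by (simp add: flip: sum.distrib) (simp add: n_def card_Diff_singleton of_nat_diff diff_divide_distrib)
  moreover have "sum inflow UNIV = sum inflow (UNIV - {l})"
    using sum.remove[of UNIV l inflow] by (simp add: inflow_def theta_center)
  moreover have "(\<Sum>i\<in>UNIV. Fmap C \<theta> x $ i)
      = Fmap C \<theta> x $ l + (\<Sum>i\<in>UNIV - {l}. Fmap C \<theta> x $ i)"
    by (rule sum.remove) auto
  ultimately show ?thesis using \<open>0 < n\<close> by (simp add: F field_simps)
qed

lemma Fmap_prob_simplex:
  assumes "x \<in> prob_simplex"
  shows "Fmap C \<theta> x \<in> prob_simplex"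
proof -
  have x1: "x $ i \<le> 1" for i using prob_simplex_nth_bounds[OF assms] by blast
  have pos: "0 < 1 - \<theta> $ i * x $ i" for i using one_minus_theta_mult_pos x1 by blast
  have "0 \<le> Fmap C \<theta> x $ i" for i
  proof -
    have "0 \<le> (\<Sum>j\<in>UNIV. \<theta> $ j * (1 - x $ j) / (1 - \<theta> $ j * x $ j))"
      using theta_nonneg x1 pos by (intro sum_nonneg divide_nonneg_pos mult_nonneg_nonneg) auto
    moreover have "0 \<le> leaf_map (real CARD('n)) (\<theta> $ i) (x $ i)"
      using theta_less_one[of i] pos[of i] by (simp add: leaf_map_def less_imp_le)
    ultimately show ?thesis using Fmap_star[OF x1] by simp
  qed
  thus ?thesis using sum_Fmap x1 by (simp add: prob_simplex_def)
qed

lemma trajectory_prob_simplex: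
  "x0 \<in> prob_simplex \<Longrightarrow> trajectory C \<theta> x0 s \<in> prob_simplex"
  by (induction s) (simp_all add: trajectory_def Fmap_prob_simplex)

end

locale nontrivial_star_network = star_network C \<theta> l for C :: "real^'n^'n" and \<theta> l +
  assumes two_le_card: "2 \<le> CARD('n)"
begin

lemma xstar_leaf:
  assumes "i \<noteq> l"
  shows "0 \<le> xstar \<theta> l $ i" "xstar \<theta> l $ i \<le> 1"
    "real CARD('n) * xstar \<theta> l $ i * (1 - \<theta> $ i * xstar \<theta> l $ i) = 1 - \<theta> $ i"
proof -
  have n: "2 \<le> real CARD('n)" using two_le_card by simp
  have "0 \<le> xstar \<theta> l $ i \<and> xstar \<theta> l $ i \<le> 1 \<and>
      real CARD('n) * xstar \<theta> l $ i * (1 - \<theta> $ i * xstar \<theta> l $ i) = 1 - \<theta> $ i"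
  proof (cases "0 < \<theta> $ i")
    case True
    show ?thesis
      using smaller_root_unit_interval[OF n True theta_less_one] True
      by (simp add: xstar_def xstar_p_def Let_def)
  next
    case False
    hence "\<theta> $ i = 0" using theta_nonneg[of i] by simp
    thus ?thesis using assms n by (simp add: xstar_def)
  qed
  thus "0 \<le> xstar \<theta> l $ i" "xstar \<theta> l $ i \<le> 1"
    "real CARD('n) * xstar \<theta> l $ i * (1 - \<theta> $ i * xstar \<theta> l $ i) = 1 - \<theta> $ i"
    by auto
qed

lemma Fmap_xstar: "Fmap C \<theta> (xstar \<theta> l) = xstar \<theta> l"
proof -
  let ?X = "xstar \<theta> l"
  have "(\<Sum>j\<in>UNIV. \<theta> $ j * (1 - ?X $ j) / (1 - \<theta> $ j * ?X $ j))
      = (\<Sum>j\<in>{j. 0 < \<theta> $ j}. \<theta> $ j * (1 - xstar_p \<theta> j) / (1 - \<theta> $ j * xstar_p \<theta> j))"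
    using theta_nonneg by (intro sum.mono_neutral_cong_right) (auto simp: xstar_def order_le_less)
  hence "Fmap C \<theta> ?X $ l = ?X $ l"
    using Fmap_star[OF xstar_leaf(2)] by (simp add: xstar_def theta_center Let_def)
  moreover have "Fmap C \<theta> ?X $ i = ?X $ i" if "i \<noteq> l" for i
    using Fmap_star[OF xstar_leaf(2)] that xstar_leaf(3)[OF that] theta_less_one[of i]
    by (simp add: leaf_map_fixed_point)
  ultimately show ?thesis by (metis vec_eq_iff)
qed

lemma xstar_prob_simplex: "xstar \<theta> l \<in> prob_simplex"
proof -
  have "0 \<le> xstar \<theta> l $ l"
  proof -
    have "0 \<le> \<theta> $ j * (1 - xstar_p \<theta> j) / (1 - \<theta> $ j * xstar_p \<theta> j)" if "0 < \<theta> $ j" for j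
    proof -
      have "j \<noteq> l" using that theta_center by auto
      thus ?thesis using xstar_leaf[of j] that one_minus_theta_mult_pos[of j "xstar \<theta> l"]
        by (simp add: xstar_def)
    qed
    hence "0 \<le> (\<Sum>j | 0 < \<theta> $ j. \<theta> $ j * (1 - xstar_p \<theta> j) / (1 - \<theta> $ j * xstar_p \<theta> j))"
      by (intro sum_nonneg) auto
    thus ?thesis by (simp add: xstar_def theta_center Let_def)
  qed
  hence "0 \<le> xstar \<theta> l $ i" for i using xstar_leaf(1) by (cases "i = l") auto
  moreover have "(\<Sum>i\<in>UNIV. xstar \<theta> l $ i) = 1"
    using sum_Fmap[OF xstar_leaf(2)] by (simp add: Fmap_xstar)
  ultimately show ?thesis by (simp add: prob_simplex_def)
qed

text \<open>The \<open>max\<close> with \<open>1/2\<close> only keeps the rate positive when every leaf rate vanishes.\<close>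
definition contraction_rate :: real where
  "contraction_rate = max (1 / 2) (Max (range (\<lambda>i. \<theta> $ i * xstar \<theta> l $ i / (1 - \<theta> $ i))))"

lemma contraction_rate_pos: "0 < contraction_rate"
  by (simp add: contraction_rate_def)

lemma leaf_rate_le_contraction_rate: "\<theta> $ i * xstar \<theta> l $ i / (1 - \<theta> $ i) \<le> contraction_rate"
  unfolding contraction_rate_def by (rule max.coboundedI2, rule Max_ge) auto

lemma contraction_rate_less_one: "contraction_rate < 1"
proof -
  have "\<theta> $ i * xstar \<theta> l $ i / (1 - \<theta> $ i) < 1" for i
  proof (cases "i = l")
    case False
    have "\<theta> $ i * xstar \<theta> l $ i < 1 - \<theta> $ i"
      using two_le_card theta_nonneg theta_less_one xstar_leaf[OF False]
      by (intro leaf_rate_less_one) auto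
    thus ?thesis using theta_less_one[of i] by simp
  qed (simp add: theta_center)
  thus ?thesis by (simp add: contraction_rate_def)
qed

lemma trajectory_leaf_dist:
  assumes x0: "x0 \<in> prob_simplex" and i: "i \<noteq> l"
  shows "\<bar>trajectory C \<theta> x0 s $ i - xstar \<theta> l $ i\<bar> \<le> contraction_rate ^ s"
proof (induction s)
  case 0
  show ?case
    using prob_simplex_nth_bounds[OF x0, of i] xstar_leaf[OF i] by (simp add: trajectory_def)
next
  case (Suc s)
  let ?x = "trajectory C \<theta> x0 s" and ?a = "xstar \<theta> l $ i"
  have x_le_1: "?x $ j \<le> 1" for j
    using prob_simplex_nth_bounds[OF trajectory_prob_simplex[OF x0]] by blast
  have "\<bar>trajectory C \<theta> x0 (Suc s) $ i - ?a\<bar>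
      = \<bar>leaf_map (real CARD('n)) (\<theta> $ i) (?x $ i) - ?a\<bar>"
    using Fmap_star[OF x_le_1] i by (simp add: trajectory_def)
  also have "\<dots> \<le> \<theta> $ i * ?a / (1 - \<theta> $ i) * \<bar>?x $ i - ?a\<bar>"
    using theta_nonneg theta_less_one xstar_leaf[OF i] x_le_1 by (intro leaf_map_contraction) auto
  also have "\<dots> \<le> contraction_rate * contraction_rate ^ s"
    using Suc.IH leaf_rate_le_contraction_rate contraction_rate_pos theta_nonneg[of i]
      theta_less_one[of i] xstar_leaf(1)[OF i]
    by (intro mult_mono) auto
  finally show ?case by simp
qed

lemma trajectory_converges_exponentially:
  assumes x0: "x0 \<in> prob_simplex"
  shows "norm (trajectory C \<theta> x0 s - xstar \<theta> l) \<le> 2 * real CARD('n) * contraction_rate ^ s"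
proof -
  have "norm (trajectory C \<theta> x0 s - xstar \<theta> l)
      \<le> 2 * (\<Sum>i\<in>UNIV - {l}. \<bar>trajectory C \<theta> x0 s $ i - xstar \<theta> l $ i\<bar>)"
    by (intro norm_diff_prob_simplex_le trajectory_prob_simplex x0 xstar_prob_simplex)
  also have "\<dots> \<le> 2 * (\<Sum>i\<in>UNIV - {l}. contraction_rate ^ s)"
    using trajectory_leaf_dist[OF x0] by (intro mult_left_mono sum_mono) auto
  also have "\<dots> \<le> 2 * real CARD('n) * contraction_rate ^ s"
    using contraction_rate_pos by (simp add: card_Diff_singleton)
  finally show ?thesis .
qed

lemma fixed_point_unique:
  assumes y: "y \<in> prob_simplex" "Fmap C \<theta> y = y"
  shows "y = xstar \<theta> l"
proof -
  have "trajectory C \<theta> y s = y" for s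
    by (induction s) (simp_all add: trajectory_def y(2))
  hence bound: "norm (y - xstar \<theta> l) \<le> 2 * real CARD('n) * contraction_rate ^ s" for s
    using trajectory_converges_exponentially[OF y(1), of s] by simp
  have "(\<lambda>s. 2 * real CARD('n) * contraction_rate ^ s) \<longlonglongrightarrow> 0"
    using contraction_rate_pos contraction_rate_less_one
    by (intro tendsto_mult_right_zero LIMSEQ_power_zero) auto
  hence "norm (y - xstar \<theta> l) \<le> 0"
    by (rule LIMSEQ_le_const) (use bound in blast)
  thus ?thesis by simp
qed

end

theorem corollary4:
  fixes C :: "real^'n^'n" and \<theta> :: "real^'n" and l :: 'n
  assumes "CARD('n) \<ge> 2"
    and "row_stochastic_zero_diag C"
    and "\<forall>i. 0 \<le> \<theta> $ i \<and> \<theta> $ i < 1"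
    and "\<exists>j. 0 < \<theta> $ j"
    and "star_topology C l"
    and "\<theta> $ l = 0"
  shows "xstar \<theta> l \<in> prob_simplex
    \<and> Fmap C \<theta> (xstar \<theta> l) = xstar \<theta> l
    \<and> (\<forall>y\<in>prob_simplex. Fmap C \<theta> y = y \<longrightarrow> y = xstar \<theta> l)
    \<and> (\<forall>x0\<in>prob_simplex. \<exists>c \<rho>. 0 \<le> c \<and> 0 < \<rho> \<and> \<rho> < 1 \<and>
          (\<forall>s. norm (trajectory C \<theta> x0 s - xstar \<theta> l) \<le> c * \<rho> ^ s))"
proof -
  interpret nontrivial_star_network C \<theta> l
    using assms(1-3,5,6) by unfold_locales auto
  have "\<exists>c \<rho>. 0 \<le> c \<and> 0 < \<rho> \<and> \<rho> < 1 \<and>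
      (\<forall>s. norm (trajectory C \<theta> x0 s - xstar \<theta> l) \<le> c * \<rho> ^ s)" if "x0 \<in> prob_simplex" for x0
    using trajectory_converges_exponentially[OF that] contraction_rate_pos contraction_rate_less_one
    by (intro exI[of _ "2 * real CARD('n)"] exI[of _ contraction_rate]) auto
  thus ?thesis
    using xstar_prob_simplex Fmap_xstar fixed_point_unique by blast
qed

end
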